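(* For every $\varphi\in\mathcal{L}_{APAL_{int}}$ and every maximally consistent theory $x$ of $APAL_{int}$: $\Box\varphi\in x$ iff $[\psi]\varphi\in x$ for all $\psi\in\mathcal{L}_{PAL_{int}}$.
   Context: $\mathcal{L}_{APAL_{int}}$: $\varphi ::= p \mid \neg\varphi \mid \varphi\wedge\varphi \mid K_i\varphi \mid \mathrm{int}(\varphi)\mid [\varphi]\varphi\mid\Box\varphi$ over a countable $\mathit{Prop}$ and finite non-empty agent set $\mathcal{A}$; $\mathcal{L}_{PAL_{int}}$ its $\Box$-free fragment; $\bot:=p\wedge\neg p$. Necessity forms: $\xi(\sharp)::=\sharp\mid\varphi\to\xi(\sharp)\mid K_i\xi(\sharp)\mid\mathrm{int}(\xi(\sharp))\mid[\varphi]\xi(\sharp)$. $APAL_{int}$: axioms: propositional tautologies; $K_i(\varphi\to\psi)\to(K_i\varphi\to K_i\psi)$; $K_i\varphi\to\varphi$; $K_i\varphi\to K_iK_i\varphi$; $\neg K_i\varphi\to K_i\neg K_i\varphi$; $\mathrm{int}(\varphi\to\psi)\to(\mathrm{int}(\varphi)\to\mathrm{int}(\psi))$; $\mathrm{int}(\varphi)\to\varphi$; $\mathrm{int}(\varphi)\to\mathrm{int}(\mathrm{int}(\varphi))$; $K_i\varphi\to\mathrm{int}(\varphi)$; $[\varphi]p\leftrightarrow(\mathrm{int}(\varphi)\to p)$; $[\varphi]\neg\psi\leftrightarrow(\mathrm{int}(\varphi)\to\neg[\varphi]\psi)$; $[\varphi](\psi\wedge\chi)\leftrightarrow[\varphi]\psi\wedge[\varphi]\chi$;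 $[\varphi]\mathrm{int}(\psi)\leftrightarrow(\mathrm{int}(\varphi)\to\mathrm{int}([\varphi]\psi))$; $[\varphi]K_i\psi\leftrightarrow(\mathrm{int}(\varphi)\to K_i[\varphi]\psi)$; $[\varphi][\psi]\chi\leftrightarrow[\neg[\varphi]\neg\mathrm{int}(\psi)]\chi$; (R7) $\Box\varphi\to[\chi]\varphi$ ($\chi\in\mathcal{L}_{PAL_{int}}$). Rules: modus ponens; from $\varphi$ infer $K_i\varphi$; from $\varphi$ infer $\mathrm{int}(\varphi)$; from $\varphi$ infer $[\psi]\varphi$; (DR5) from $\xi([\psi]\chi)$ for all $\psi\in\mathcal{L}_{PAL_{int}}$ infer $\xi(\Box\chi)$. A theory is a set of formulas containing all theorems of $APAL_{int}$ and closed under modus ponens and (DR5); it is consistent iff $\bot\notin$ it; a set of formulas is consistent iff contained in a consistent theory; a theory is maximally consistent iff it is consistent and every set properly containing it is inconsistent. *)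

theory Defs
  imports "HOL-Library.Countable"
begin

datatype ('p, 'a) fm =
    Atom 'p
  | Neg "('p, 'a) fm"
  | Conj "('p, 'a) fm" "('p, 'a) fm"
  | K 'a "('p, 'a) fm"
  | IntF "('p, 'a) fm"
  | Ann "('p, 'a) fm" "('p, 'a) fm"
  | Box "('p, 'a) fm"

definition Imp :: "('p, 'a) fm \<Rightarrow> ('p, 'a) fm \<Rightarrow> ('p, 'a) fm" where
  "Imp \<phi> \<psi> = Neg (Conj \<phi> (Neg \<psi>))"

definition Iff :: "('p, 'a) fm \<Rightarrow> ('p, 'a) fm \<Rightarrow> ('p, 'a) fm" where
  "Iff \<phi> \<psi> = Conj (Imp \<phi> \<psi>) (Imp \<psi> \<phi>)"

definition Bot :: "('p, 'a) fm" where
  "Bot = Conj (Atom (SOME p. True)) (Neg (Atom (SOME p. True)))"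

fun box_free :: "('p, 'a) fm \<Rightarrow> bool" where
  "box_free (Atom p) = True"
| "box_free (Neg \<phi>) = box_free \<phi>"
| "box_free (Conj \<phi> \<psi>) = (box_free \<phi> \<and> box_free \<psi>)"
| "box_free (K i \<phi>) = box_free \<phi>"
| "box_free (IntF \<phi>) = box_free \<phi>"
| "box_free (Ann \<phi> \<psi>) = (box_free \<phi> \<and> box_free \<psi>)"
| "box_free (Box \<phi>) = False"

datatype ('p, 'a) nform =
    Hole
  | NImp "('p, 'a) fm" "('p, 'a) nform"
  | NK 'a "('p, 'a) nform"
  | NInt "('p, 'a) nform"
  | NAnn "('p, 'a) fm" "('p, 'a) nform"

fun fill :: "('p, 'a) nform \<Rightarrow> ('p, 'a) fm \<Rightarrow> ('p, 'a) fm" where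
  "fill Hole \<chi> = \<chi>"
| "fill (NImp \<phi> \<xi>) \<chi> = Imp \<phi> (fill \<xi> \<chi>)"
| "fill (NK i \<xi>) \<chi> = K i (fill \<xi> \<chi>)"
| "fill (NInt \<xi>) \<chi> = IntF (fill \<xi> \<chi>)"
| "fill (NAnn \<phi> \<xi>) \<chi> = Ann \<phi> (fill \<xi> \<chi>)"

fun peval :: "(('p, 'a) fm \<Rightarrow> bool) \<Rightarrow> ('p, 'a) fm \<Rightarrow> bool" where
  "peval v (Neg \<phi>) = (\<not> peval v \<phi>)"
| "peval v (Conj \<phi> \<psi>) = (peval v \<phi> \<and> peval v \<psi>)"
| "peval v \<phi> = v \<phi>"

definition tautology :: "('p, 'a) fm \<Rightarrow> bool" where
  "tautology \<phi> = (\<forall>v. peval v \<phi>)"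

inductive derivable :: "('p, 'a) fm \<Rightarrow> bool" where
  A_taut: "tautology \<phi> \<Longrightarrow> derivable \<phi>"
| A_K: "derivable (Imp (K i (Imp \<phi> \<psi>)) (Imp (K i \<phi>) (K i \<psi>)))"
| A_T: "derivable (Imp (K i \<phi>) \<phi>)"
| A_4: "derivable (Imp (K i \<phi>) (K i (K i \<phi>)))"
| A_5: "derivable (Imp (Neg (K i \<phi>)) (K i (Neg (K i \<phi>))))"
| A_intK: "derivable (Imp (IntF (Imp \<phi> \<psi>)) (Imp (IntF \<phi>) (IntF \<psi>)))"
| A_intT: "derivable (Imp (IntF \<phi>) \<phi>)"
| A_int4: "derivable (Imp (IntF \<phi>) (IntF (IntF \<phi>)))"
| A_Kint: "derivable (Imp (K i \<phi>) (IntF \<phi>))"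
| A_Atom: "derivable (Iff (Ann \<phi> (Atom p)) (Imp (IntF \<phi>) (Atom p)))"
| A_Neg: "derivable (Iff (Ann \<phi> (Neg \<psi>)) (Imp (IntF \<phi>) (Neg (Ann \<phi> \<psi>))))"
| A_Conj: "derivable (Iff (Ann \<phi> (Conj \<psi> \<chi>)) (Conj (Ann \<phi> \<psi>) (Ann \<phi> \<chi>)))"
| A_Int: "derivable (Iff (Ann \<phi> (IntF \<psi>)) (Imp (IntF \<phi>) (IntF (Ann \<phi> \<psi>))))"
| A_AnnK: "derivable (Iff (Ann \<phi> (K i \<psi>)) (Imp (IntF \<phi>) (K i (Ann \<phi> \<psi>))))"
| A_Comp: "derivable (Iff (Ann \<phi> (Ann \<psi> \<chi>)) (Ann (Neg (Ann \<phi> (Neg (IntF \<psi>)))) \<chi>))"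
| R7: "box_free \<chi> \<Longrightarrow> derivable (Imp (Box \<phi>) (Ann \<chi> \<phi>))"
| MP: "derivable (Imp \<phi> \<psi>) \<Longrightarrow> derivable \<phi> \<Longrightarrow> derivable \<psi>"
| NecK: "derivable \<phi> \<Longrightarrow> derivable (K i \<phi>)"
| NecInt: "derivable \<phi> \<Longrightarrow> derivable (IntF \<phi>)"
| NecAnn: "derivable \<phi> \<Longrightarrow> derivable (Ann \<psi> \<phi>)"
| DR5: "(\<forall>\<psi>. box_free \<psi> \<longrightarrow> derivable (fill \<xi> (Ann \<psi> \<chi>))) \<Longrightarrow> derivable (fill \<xi> (Box \<chi>))"

definition is_theory :: "('p, 'a) fm set \<Rightarrow> bool" where
  "is_theory \<Gamma> \<longleftrightarrow>
     {\<phi>. derivable \<phi>} \<subseteq> \<Gamma>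
   \<and> (\<forall>\<phi> \<psi>. Imp \<phi> \<psi> \<in> \<Gamma> \<longrightarrow> \<phi> \<in> \<Gamma> \<longrightarrow> \<psi> \<in> \<Gamma>)
   \<and> (\<forall>\<xi> \<chi>. (\<forall>\<psi>. box_free \<psi> \<longrightarrow> fill \<xi> (Ann \<psi> \<chi>) \<in> \<Gamma>) \<longrightarrow> fill \<xi> (Box \<chi>) \<in> \<Gamma>)"

definition consistent_theory :: "('p, 'a) fm set \<Rightarrow> bool" where
  "consistent_theory \<Gamma> \<longleftrightarrow> is_theory \<Gamma> \<and> Bot \<notin> \<Gamma>"

definition consistent_set :: "('p, 'a) fm set \<Rightarrow> bool" where
  "consistent_set \<Delta> \<longleftrightarrow> (\<exists>\<Gamma>. consistent_theory \<Gamma> \<and> \<Delta> \<subseteq> \<Gamma>)"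

definition max_consistent_theory :: "('p, 'a) fm set \<Rightarrow> bool" where
  "max_consistent_theory \<Gamma> \<longleftrightarrow>
     consistent_theory \<Gamma> \<and> (\<forall>\<Delta>. \<Gamma> \<subset> \<Delta> \<longrightarrow> \<not> consistent_set \<Delta>)"

end

theory Submission
  imports Defs
begin

lemma max_consistent_theory_is_theory: "max_consistent_theory \<Gamma> \<Longrightarrow> is_theory \<Gamma>"
  by (simp add: max_consistent_theory_def consistent_theory_def)

lemma theory_derivable: "is_theory \<Gamma> \<Longrightarrow> derivable \<phi> \<Longrightarrow> \<phi> \<in> \<Gamma>"
  unfolding is_theory_def by blast

lemma theory_MP: "is_theory \<Gamma> \<Longrightarrow> Imp \<phi> \<psi> \<in> \<Gamma> \<Longrightarrow> \<phi> \<in> \<Gamma> \<Longrightarrow> \<psi> \<in> \<Gamma>"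
  unfolding is_theory_def by blast

lemma theory_DR5:
  "is_theory \<Gamma> \<Longrightarrow> (\<And>\<psi>. box_free \<psi> \<Longrightarrow> fill \<xi> (Ann \<psi> \<chi>) \<in> \<Gamma>) \<Longrightarrow> fill \<xi> (Box \<chi>) \<in> \<Gamma>"
  unfolding is_theory_def by blast

lemma theory_Box_iff:
  assumes "is_theory \<Gamma>"
  shows "Box \<phi> \<in> \<Gamma> \<longleftrightarrow> (\<forall>\<psi>. box_free \<psi> \<longrightarrow> Ann \<psi> \<phi> \<in> \<Gamma>)"
proof
  assume "Box \<phi> \<in> \<Gamma>"
  then show "\<forall>\<psi>. box_free \<psi> \<longrightarrow> Ann \<psi> \<phi> \<in> \<Gamma>"
    using assms theory_MP theory_derivable derivable.R7 by blast
next
  assume "\<forall>\<psi>. box_free \<psi> \<longrightarrow> Ann \<psi> \<phi> \<in> \<Gamma>"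
  then have "fill Hole (Box \<phi>) \<in> \<Gamma>"
    using theory_DR5 [OF assms, of Hole \<phi>] by simp
  then show "Box \<phi> \<in> \<Gamma>" by simp
qed

theorem mainTheorem20:
  fixes \<phi> :: "('p :: countable, 'a :: finite) fm"
    and x :: "('p, 'a) fm set"
  assumes "max_consistent_theory x"
  shows "Box \<phi> \<in> x \<longleftrightarrow> (\<forall>\<psi>. box_free \<psi> \<longrightarrow> Ann \<psi> \<phi> \<in> x)"
  using theory_Box_iff [OF max_consistent_theory_is_theory [OF assms]] .

end
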